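(* Let $G=(U\cup V,E)$ be a bipartite graph, where $U$ and $V$ are disjoint stable sets, such that for every $v\in V$ and every $u\in N(v)$ we have $d(u)<2\,d(v)$. If $d(u)\neq d(v)$ for every edge $(u,v)\in E$, then $\eta(G)=1$; otherwise $\eta(G)=2$.
   Context: All graphs are finite, simple and undirected. For a vertex $v$, $N(v)$ is its set of neighbours and $d(v)=|N(v)|$. For a positive integer $k$, $[k]=\{1,\dots,k\}$. For a labeling $f:V(G)\to[k]$ and $S\subseteq V(G)$, $f(S)=\sum_{u\in S}f(u)$. A labeling $f:V(G)\to[k]$ is an additive $k$-coloring if $f(N(u))\neq f(N(v))$ for every edge $(u,v)$ of $G$. The additive chromatic number $\eta(G)$ is the least $k$ for which $G$ has an additive $k$-coloring. *)

theory Defs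
  imports Main
begin

definition simple_graph :: "'a set \<Rightarrow> ('a \<Rightarrow> 'a \<Rightarrow> bool) \<Rightarrow> bool" where
  "simple_graph Vs E \<longleftrightarrow> finite Vs \<and> (\<forall>x y. E x y \<longrightarrow> E y x)
     \<and> (\<forall>x. \<not> E x x) \<and> (\<forall>x y. E x y \<longrightarrow> x \<in> Vs \<and> y \<in> Vs)"

definition nbhd :: "'a set \<Rightarrow> ('a \<Rightarrow> 'a \<Rightarrow> bool) \<Rightarrow> 'a \<Rightarrow> 'a set" where
  "nbhd Vs E v = {u \<in> Vs. E v u}"

definition deg :: "'a set \<Rightarrow> ('a \<Rightarrow> 'a \<Rightarrow> bool) \<Rightarrow> 'a \<Rightarrow> nat" where
  "deg Vs E v = card (nbhd Vs E v)"

definition bipartition :: "'a set \<Rightarrow> ('a \<Rightarrow> 'a \<Rightarrow> bool) \<Rightarrow> 'a set \<Rightarrow> 'a set \<Rightarrow> bool" where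
  "bipartition Vs E U W \<longleftrightarrow> U \<inter> W = {} \<and> U \<union> W = Vs
     \<and> (\<forall>x\<in>U. \<forall>y\<in>U. \<not> E x y) \<and> (\<forall>x\<in>W. \<forall>y\<in>W. \<not> E x y)"

definition additive_coloring :: "'a set \<Rightarrow> ('a \<Rightarrow> 'a \<Rightarrow> bool) \<Rightarrow> nat \<Rightarrow> ('a \<Rightarrow> nat) \<Rightarrow> bool" where
  "additive_coloring Vs E k f \<longleftrightarrow> (\<forall>v\<in>Vs. f v \<in> {1..k})
     \<and> (\<forall>u v. E u v \<longrightarrow> sum f (nbhd Vs E u) \<noteq> sum f (nbhd Vs E v))"

definition eta :: "'a set \<Rightarrow> ('a \<Rightarrow> 'a \<Rightarrow> bool) \<Rightarrow> nat" where
  "eta Vs E = (LEAST k. 1 \<le> k \<and> (\<exists>f. additive_coloring Vs E k f))"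

end

theory Submission
  imports Defs
begin

text \<open>With the constant labeling 1 the neighbourhood sums are the degrees, so \<open>\<eta>(G) = 1\<close>
  exactly when adjacent vertices have distinct degrees. Otherwise labeling \<open>U\<close> by 2 and \<open>V\<close>
  by 1 gives sums \<open>d(u)\<close> on \<open>U\<close> and \<open>2 d(v)\<close> on \<open>V\<close>, and the degree hypothesis
  \<open>d(u) < 2 d(v)\<close> separates them along every edge.\<close>

lemma sum_nbhd_const:
  assumes "\<forall>x\<in>nbhd Vs E v. f x = c"
  shows "sum f (nbhd Vs E v) = c * deg Vs E v"
  using assms by (simp add: deg_def)

lemma additive_coloring_1_iff:
  "additive_coloring Vs E 1 f \<longleftrightarrow>
     (\<forall>v\<in>Vs. f v = 1) \<and> (\<forall>u v. E u v \<longrightarrow> deg Vs E u \<noteq> deg Vs E v)"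
proof -
  have "sum f (nbhd Vs E v) = deg Vs E v" if "\<forall>v\<in>Vs. f v = 1" for v
    using sum_nbhd_const[of Vs E v f 1] that by (simp add: nbhd_def)
  then show ?thesis
    unfolding additive_coloring_def by auto
qed

lemma eta_eq_1:
  assumes "additive_coloring Vs E 1 f"
  shows "eta Vs E = 1"
  unfolding eta_def using assms by (intro Least_equality) auto

lemma eta_eq_2:
  assumes "\<nexists>f. additive_coloring Vs E 1 f" and "additive_coloring Vs E 2 g"
  shows "eta Vs E = 2"
  unfolding eta_def
proof (rule Least_equality)
  show "1 \<le> (2::nat) \<and> (\<exists>f. additive_coloring Vs E 2 f)"
    using assms(2) by auto
next
  fix k :: nat
  assume "1 \<le> k \<and> (\<exists>f. additive_coloring Vs E k f)"
  with assms(1) show "2 \<le> k"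
    by (cases "k = 1") auto
qed

lemma sum_nbhd_side_weights:
  assumes "bipartition Vs E U W"
  defines "g \<equiv> \<lambda>v. if v \<in> U then 2 else 1 :: nat"
  shows "u \<in> U \<Longrightarrow> sum g (nbhd Vs E u) = deg Vs E u"
    and "w \<in> W \<Longrightarrow> sum g (nbhd Vs E w) = 2 * deg Vs E w"
proof -
  assume "u \<in> U"
  then have "\<forall>x\<in>nbhd Vs E u. g x = 1"
    using assms unfolding bipartition_def nbhd_def by auto
  then show "sum g (nbhd Vs E u) = deg Vs E u"
    using sum_nbhd_const by fastforce
next
  assume "w \<in> W"
  then have "\<forall>x\<in>nbhd Vs E w. g x = 2"
    using assms unfolding bipartition_def nbhd_def by auto
  then show "sum g (nbhd Vs E w) = 2 * deg Vs E w"
    by (rule sum_nbhd_const)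
qed

lemma bipartite_side_weights_additive_coloring:
  assumes "simple_graph Vs E" and "bipartition Vs E U W"
    and deg_bound: "\<forall>v\<in>W. \<forall>u\<in>nbhd Vs E v. deg Vs E u < 2 * deg Vs E v"
  shows "additive_coloring Vs E 2 (\<lambda>v. if v \<in> U then 2 else 1)"
    (is "additive_coloring Vs E 2 ?g")
proof -
  have sides: "u \<in> U \<and> w \<in> W \<or> u \<in> W \<and> w \<in> U" if "E u w" for u w
    using assms(1,2) that unfolding simple_graph_def bipartition_def by blast
  have separated: "sum ?g (nbhd Vs E u) \<noteq> sum ?g (nbhd Vs E w)"
    if "u \<in> U" "w \<in> W" "E w u" for u w
  proof -
    have "u \<in> nbhd Vs E w"
      using assms(1) that(3) unfolding simple_graph_def nbhd_def by blast
    then have "deg Vs E u < 2 * deg Vs E w"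
      using deg_bound that(2) by blast
    then show ?thesis
      using sum_nbhd_side_weights[OF assms(2)] that(1,2) by simp
  qed
  have symmetric: "E w u" if "E u w" for u w
    using assms(1) that unfolding simple_graph_def by blast
  show ?thesis
    unfolding additive_coloring_def
  proof (intro conjI ballI allI impI)
    fix u w
    assume "E u w"
    then show "sum ?g (nbhd Vs E u) \<noteq> sum ?g (nbhd Vs E w)"
      using sides separated symmetric by metis
  qed auto
qed

theorem mainTheorem1:
  fixes Vs U W :: "'a set" and E :: "'a \<Rightarrow> 'a \<Rightarrow> bool"
  assumes "simple_graph Vs E"
    and "bipartition Vs E U W"
    and "\<forall>v\<in>W. \<forall>u\<in>nbhd Vs E v. deg Vs E u < 2 * deg Vs E v"
  shows "eta Vs E = (if (\<forall>u v. E u v \<longrightarrow> deg Vs E u \<noteq> deg Vs E v) then 1 else 2)"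
proof (cases "\<forall>u v. E u v \<longrightarrow> deg Vs E u \<noteq> deg Vs E v")
  case True
  then have "additive_coloring Vs E 1 (\<lambda>_. 1)"
    using additive_coloring_1_iff by blast
  with True show ?thesis
    by (simp add: eta_eq_1)
next
  case False
  then have "\<nexists>f. additive_coloring Vs E 1 f"
    unfolding additive_coloring_1_iff by simp
  then have "eta Vs E = 2"
    using eta_eq_2 bipartite_side_weights_additive_coloring[OF assms] by blast
  with False show ?thesis
    by simp
qed

end
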